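(* For every positive integer $n$, the difference graph of the cyclic group $\mathbb{Z}_n$ equals the difference graph of the dihedral group $D_{2n}$ of order $2n$, where $\mathbb{Z}_n$ is identified with the cyclic subgroup of rotations of index $2$ in $D_{2n}$.
   Context: For a finite group $G$ with identity $e$: the intersection power graph $\mathcal{G}_I(G)$ has vertex set $G$, two distinct non-identity vertices $x,y$ being adjacent iff $\langle x\rangle\cap\langle y\rangle\neq\{e\}$, and $e$ being adjacent to every other vertex. The power graph $\mathcal{P}(G)$ has vertex set $G$, two distinct vertices being adjacent iff one is a power of the other. The difference graph $\mathcal{D}(G)$ is the graph on vertex set $G$ with edge set $E(\mathcal{G}_I(G))\setminus E(\mathcal{P}(G))$, with all isolated vertices removed. *)

theory Defs
  imports "HOL-Algebra.Algebra"
begin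

text \<open>Graphs are represented as a pair (vertex set, edge set), edges being
  two-element sets of vertices.\<close>

definition ipg_adj :: "('a, 'b) monoid_scheme \<Rightarrow> 'a \<Rightarrow> 'a \<Rightarrow> bool" where
  "ipg_adj G x y \<longleftrightarrow> x \<in> carrier G \<and> y \<in> carrier G \<and> x \<noteq> y \<and>
     (x = \<one>\<^bsub>G\<^esub> \<or> y = \<one>\<^bsub>G\<^esub> \<or>
      generate G {x} \<inter> generate G {y} \<noteq> {\<one>\<^bsub>G\<^esub>})"

definition pg_adj :: "('a, 'b) monoid_scheme \<Rightarrow> 'a \<Rightarrow> 'a \<Rightarrow> bool" where
  "pg_adj G x y \<longleftrightarrow> x \<in> carrier G \<and> y \<in> carrier G \<and> x \<noteq> y \<and>
     ((\<exists>k::int. y = x [^]\<^bsub>G\<^esub> k) \<or> (\<exists>k::int. x = y [^]\<^bsub>G\<^esub> k))"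

definition diff_edges :: "('a, 'b) monoid_scheme \<Rightarrow> 'a set set" where
  "diff_edges G = {{x, y} | x y. ipg_adj G x y \<and> \<not> pg_adj G x y}"

text \<open>Difference graph: edges of the intersection power graph not in the power
  graph, with isolated vertices removed (vertices = those lying on an edge).\<close>
definition diff_graph :: "('a, 'b) monoid_scheme \<Rightarrow> 'a set \<times> 'a set set" where
  "diff_graph G = (\<Union> (diff_edges G), diff_edges G)"

text \<open>Dihedral group of order 2n: (a, s) stands for r^a f^s with 0 \<le> a < n.\<close>
definition dihedral :: "nat \<Rightarrow> (nat \<times> bool) monoid" where
  "dihedral n = \<lparr> carrier = {(a, s). a < n},
     monoid.mult = (\<lambda>(a, s) (b, t). ((if s then a + (n - b) else a + b) mod n, s \<noteq> t)),
     monoid.one = (0, False) \<rparr>"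

definition rotations :: "nat \<Rightarrow> (nat \<times> bool) set" where
  "rotations n = {(a, False) | a. a < n}"

end

theory Submission
  imports Defs
begin

text \<open>Both adjacency relations of a subgroup are those of the ambient group restricted to it,
  because cyclic subgroups and integer powers do not depend on the surrounding group. So the
  difference graphs can only differ by edges through elements outside the subgroup. An
  involution x generates just {1, x}, hence whenever it meets the cyclic subgroup of y
  nontrivially it is a power of y, and every edge at x in the intersection power graph is
  already an edge of the power graph. In the dihedral group every element outside the
  rotations is a reflection, hence an involution.\<close>

lemma ipg_adj_sym: "ipg_adj G x y \<longleftrightarrow> ipg_adj G y x"
  unfolding ipg_adj_def by blast

lemma pg_adj_sym: "pg_adj G x y \<longleftrightarrow> pg_adj G y x"
  unfolding pg_adj_def by blast

lemma (in group) ipg_adj_subgroup_iff: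
  assumes "subgroup H G"
  shows "ipg_adj (G\<lparr>carrier := H\<rparr>) x y \<longleftrightarrow> x \<in> H \<and> y \<in> H \<and> ipg_adj G x y"
proof -
  have "generate (G\<lparr>carrier := H\<rparr>) {z} = generate G {z}" if "z \<in> H" for z
    using that assms by (intro generate_consistent) auto
  then show ?thesis
    using subgroup.subset[OF assms] by (auto simp: ipg_adj_def)
qed

lemma (in group) pg_adj_subgroup_iff:
  assumes "subgroup H G"
  shows "pg_adj (G\<lparr>carrier := H\<rparr>) x y \<longleftrightarrow> x \<in> H \<and> y \<in> H \<and> pg_adj G x y"
  using int_pow_consistent[OF assms] subgroup.subset[OF assms] by (auto simp: pg_adj_def)

lemma (in group) generate_involution_subset:
  assumes x: "x \<in> carrier G" and xx: "x \<otimes> x = \<one>"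
  shows "generate G {x} \<subseteq> {\<one>, x}"
proof (rule generate_subgroup_incl)
  have "inv x = x"
    by (rule inv_equality[OF xx x x])
  then show "subgroup {\<one>, x} G"
    using x xx by (intro subgroupI) auto
qed (use x in auto)

lemma (in group) ipg_adj_involution_imp_pg_adj:
  assumes adj: "ipg_adj G x y" and xx: "x \<otimes> x = \<one>"
  shows "pg_adj G x y"
proof -
  have x: "x \<in> carrier G" and y: "y \<in> carrier G" and "x \<noteq> y"
    using adj by (auto simp: ipg_adj_def)
  consider "x = \<one>" | "y = \<one>" | "generate G {x} \<inter> generate G {y} \<noteq> {\<one>}"
    using adj by (auto simp: ipg_adj_def)
  then show ?thesis
  proof cases
    case 1
    then have "x = y [^] (0::int)" by simp
    with x y \<open>x \<noteq> y\<close> show ?thesis unfolding pg_adj_def by blast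
  next
    case 2
    then have "y = x [^] (0::int)" by simp
    with x y \<open>x \<noteq> y\<close> show ?thesis unfolding pg_adj_def by blast
  next
    case 3
    have "\<one> \<in> generate G {x} \<inter> generate G {y}"
      by (auto intro: generate.one)
    with 3 generate_involution_subset[OF x xx] have "x \<in> generate G {y}"
      by blast
    then obtain k :: int where "x = y [^] k"
      using generate_pow[OF y] by auto
    with x y \<open>x \<noteq> y\<close> show ?thesis unfolding pg_adj_def by blast
  qed
qed

lemma (in group) diff_edges_subgroup_eq:
  assumes H: "subgroup H G" and invol: "\<And>x. x \<in> carrier G - H \<Longrightarrow> x \<otimes> x = \<one>"
  shows "diff_edges (G\<lparr>carrier := H\<rparr>) = diff_edges G"
proof -
  have "x \<in> H" if "ipg_adj G x y" "\<not> pg_adj G x y" for x y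
  proof (rule ccontr)
    assume "x \<notin> H"
    with that(1) have "x \<otimes> x = \<one>"
      by (intro invol) (auto simp: ipg_adj_def)
    with that show False
      using ipg_adj_involution_imp_pg_adj by blast
  qed
  then have "x \<in> H \<and> y \<in> H" if "ipg_adj G x y" "\<not> pg_adj G x y" for x y
    using that ipg_adj_sym pg_adj_sym by metis
  then have "(ipg_adj (G\<lparr>carrier := H\<rparr>) x y \<and> \<not> pg_adj (G\<lparr>carrier := H\<rparr>) x y)
      \<longleftrightarrow> (ipg_adj G x y \<and> \<not> pg_adj G x y)" for x y
    by (auto simp: ipg_adj_subgroup_iff[OF H] pg_adj_subgroup_iff[OF H])
  then show ?thesis
    unfolding diff_edges_def by simp
qed

definition reflection_sign :: "bool \<Rightarrow> int" where
  "reflection_sign s = (if s then -1 else 1)"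

lemma dihedral_mult_fst:
  assumes "b < n"
  shows "int (fst ((a, s) \<otimes>\<^bsub>dihedral n\<^esub> (b, t))) = (int a + reflection_sign s * int b) mod int n"
proof (cases s)
  case True
  have "int (a + (n - b)) = int a - int b + int n"
    using assms by simp
  then have "int ((a + (n - b)) mod n) = (int a - int b + int n) mod int n"
    by (simp only: zmod_int)
  also have "\<dots> = (int a - int b) mod int n"
    by (rule mod_add_self2)
  finally show ?thesis
    using True by (simp add: dihedral_def reflection_sign_def)
next
  case False
  then show ?thesis
    by (simp add: dihedral_def reflection_sign_def zmod_int)
qed

lemma dihedral_mult_snd: "snd ((a, s) \<otimes>\<^bsub>dihedral n\<^esub> (b, t)) = (s \<noteq> t)"
  by (simp add: dihedral_def)

lemma dihedral_mult_assoc: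
  assumes "b < n" "c < n"
  shows "((a, s) \<otimes>\<^bsub>dihedral n\<^esub> (b, t)) \<otimes>\<^bsub>dihedral n\<^esub> (c, u)
       = (a, s) \<otimes>\<^bsub>dihedral n\<^esub> ((b, t) \<otimes>\<^bsub>dihedral n\<^esub> (c, u))"
proof -
  let ?D = "dihedral n"
  define p where "p = fst ((a, s) \<otimes>\<^bsub>?D\<^esub> (b, t))"
  define q where "q = fst ((b, t) \<otimes>\<^bsub>?D\<^esub> (c, u))"
  have p: "(a, s) \<otimes>\<^bsub>?D\<^esub> (b, t) = (p, s \<noteq> t)"
    by (simp add: p_def prod_eq_iff dihedral_mult_snd)
  have q: "(b, t) \<otimes>\<^bsub>?D\<^esub> (c, u) = (q, t \<noteq> u)"
    by (simp add: q_def prod_eq_iff dihedral_mult_snd)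
  have p_int: "int p = (int a + reflection_sign s * int b) mod int n"
    unfolding p_def by (rule dihedral_mult_fst[OF assms(1)])
  have q_int: "int q = (int b + reflection_sign t * int c) mod int n"
    unfolding q_def by (rule dihedral_mult_fst[OF assms(2)])
  have "q < n"
    using assms(2) by (simp add: q_def dihedral_def)
  have sign_mult: "reflection_sign (s \<noteq> t) = reflection_sign s * reflection_sign t"
    by (simp add: reflection_sign_def)
  have "int (fst ((p, s \<noteq> t) \<otimes>\<^bsub>?D\<^esub> (c, u)))
      = (int a + reflection_sign s * int b + reflection_sign s * reflection_sign t * int c) mod int n"
    unfolding dihedral_mult_fst[OF assms(2)] p_int sign_mult
    by (simp add: mod_add_left_eq)
  also have "\<dots> = (int a + reflection_sign s * (int b + reflection_sign t * int c)) mod int n"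
    by (simp add: algebra_simps)
  also have "\<dots> = int (fst ((a, s) \<otimes>\<^bsub>?D\<^esub> (q, t \<noteq> u)))"
    unfolding dihedral_mult_fst[OF \<open>q < n\<close>] q_int
    by (metis mod_add_right_eq mod_mult_right_eq)
  finally show ?thesis
    unfolding p q by (auto simp: prod_eq_iff dihedral_mult_snd)
qed

lemma dihedral_group:
  assumes "n \<ge> 1"
  shows "group (dihedral n)"
proof (rule groupI)
  fix x y z
  assume x: "x \<in> carrier (dihedral n)" and y: "y \<in> carrier (dihedral n)"
    and z: "z \<in> carrier (dihedral n)"
  obtain a s where a: "x = (a, s)" "a < n"
    using x by (auto simp: dihedral_def)
  show "x \<otimes>\<^bsub>dihedral n\<^esub> y \<in> carrier (dihedral n)"
    using assms by (auto simp: dihedral_def split: prod.splits)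
  show "x \<otimes>\<^bsub>dihedral n\<^esub> y \<otimes>\<^bsub>dihedral n\<^esub> z = x \<otimes>\<^bsub>dihedral n\<^esub> (y \<otimes>\<^bsub>dihedral n\<^esub> z)"
    using y z dihedral_mult_assoc a(1) by (auto simp: dihedral_def)
  show "\<one>\<^bsub>dihedral n\<^esub> \<otimes>\<^bsub>dihedral n\<^esub> x = x"
    using a by (simp add: dihedral_def)
  show "\<exists>w \<in> carrier (dihedral n). w \<otimes>\<^bsub>dihedral n\<^esub> x = \<one>\<^bsub>dihedral n\<^esub>"
  proof (cases s)
    case True
    then show ?thesis
      using a x by (intro bexI[of _ x]) (auto simp: dihedral_def)
  next
    case False
    have "((n - a) mod n + a) mod n = 0"
      using a(2) by (simp add: mod_add_left_eq)
    then show ?thesis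
      using a False assms by (intro bexI[of _ "((n - a) mod n, False)"]) (auto simp: dihedral_def)
  qed
qed (use assms in \<open>simp add: dihedral_def\<close>)

lemma rotations_subgroup:
  assumes "n \<ge> 1"
  shows "subgroup (rotations n) (dihedral n)"
proof -
  interpret group "dihedral n"
    using assms by (rule dihedral_group)
  show ?thesis
  proof (rule subgroupI)
    fix x
    assume "x \<in> rotations n"
    then obtain a where a: "x = (a, False)" "a < n"
      by (auto simp: rotations_def)
    have "((n - a) mod n + a) mod n = 0"
      using a(2) by (simp add: mod_add_left_eq)
    then have "inv\<^bsub>dihedral n\<^esub> x = ((n - a) mod n, False)"
      using a assms by (intro inv_equality) (auto simp: dihedral_def)
    then show "inv\<^bsub>dihedral n\<^esub> x \<in> rotations n"
      using assms by (simp add: rotations_def)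
  next
    have "(0, False) \<in> rotations n"
      using assms by (simp add: rotations_def)
    then show "rotations n \<noteq> {}"
      by blast
  qed (use assms in \<open>auto simp: rotations_def dihedral_def\<close>)
qed

lemma dihedral_reflection_involution:
  assumes "x \<in> carrier (dihedral n) - rotations n"
  shows "x \<otimes>\<^bsub>dihedral n\<^esub> x = \<one>\<^bsub>dihedral n\<^esub>"
  using assms by (auto simp: dihedral_def rotations_def)

theorem lemma8p1:
  fixes n :: nat
  assumes "n \<ge> 1"
  shows "diff_graph ((dihedral n)\<lparr>carrier := rotations n\<rparr>) = diff_graph (dihedral n)"
proof -
  interpret group "dihedral n"
    using assms by (rule dihedral_group)
  have "diff_edges ((dihedral n)\<lparr>carrier := rotations n\<rparr>) = diff_edges (dihedral n)"
    using rotations_subgroup[OF assms] dihedral_reflection_involution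
    by (rule diff_edges_subgroup_eq)
  then show ?thesis
    unfolding diff_graph_def by simp
qed

end
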